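(* Let $G$ be a distance-regular graph of diameter $d$ which is an antipodal double cover. If $l$ is a distance magic labeling or a closed distance magic labeling of $G$, then $l$ is a $\{j,d-j\}$-magic labeling of $G$ for every $j\in\{0,1,\dots,d\}$. Moreover, if $G$ is bipartite and $l$ is a distance magic labeling, then $d\equiv 2\pmod 4$.
   Context: A connected graph $G$ of diameter $d$ is distance-regular if there are non-negative integers $b_i,c_i$ ($0\le i\le d$) such that for any two vertices $x,y$ at distance $i$, $y$ has exactly $c_i$ neighbours at distance $i-1$ from $x$ and exactly $b_i$ neighbours at distance $i+1$ from $x$. For a vertex $x$, $G_i(x)$ is the set of vertices at distance $i$ from $x$. $G$ is an antipodal double cover if $|G_d(x)|=1$ for every vertex $x$. For a set of distances $D$, $N_D(x)=\bigcup_{i\in D}G_i(x)$. For $G$ of order $N$, a $D$-magic labeling is a bijection $f:V(G)\to\{1,\dots,N\}$ such that $\sum_{y\in N_D(x)}f(y)$ is the same constant for every vertex $x$. A distance magic labeling is a $\{1\}$-magic labeling and a closed distance magic labeling is a $\{0,1\}$-magic labeling. *)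

theory Defs
  imports Main
begin

text \<open>A finite simple graph is given by a vertex set V and a symmetric, irreflexive
adjacency relation E (only edges between vertices of V are considered).\<close>

definition simple_graph :: "'a set \<Rightarrow> ('a \<Rightarrow> 'a \<Rightarrow> bool) \<Rightarrow> bool" where
  "simple_graph V E \<longleftrightarrow> finite V \<and> V \<noteq> {} \<and> (\<forall>x y. E x y \<longrightarrow> E y x) \<and> (\<forall>x. \<not> E x x)"

definition adj_rel :: "'a set \<Rightarrow> ('a \<Rightarrow> 'a \<Rightarrow> bool) \<Rightarrow> ('a \<times> 'a) set" where
  "adj_rel V E = {(x, y). x \<in> V \<and> y \<in> V \<and> E x y}"

definition connected_graph :: "'a set \<Rightarrow> ('a \<Rightarrow> 'a \<Rightarrow> bool) \<Rightarrow> bool" where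
  "connected_graph V E \<longleftrightarrow> simple_graph V E \<and> (\<forall>x\<in>V. \<forall>y\<in>V. (x, y) \<in> (adj_rel V E)\<^sup>*)"

definition gdist :: "'a set \<Rightarrow> ('a \<Rightarrow> 'a \<Rightarrow> bool) \<Rightarrow> 'a \<Rightarrow> 'a \<Rightarrow> nat" where
  "gdist V E x y = (LEAST n. (x, y) \<in> (adj_rel V E) ^^ n)"

definition diameter :: "'a set \<Rightarrow> ('a \<Rightarrow> 'a \<Rightarrow> bool) \<Rightarrow> nat" where
  "diameter V E = Max {gdist V E x y | x y. x \<in> V \<and> y \<in> V}"

definition sphere :: "'a set \<Rightarrow> ('a \<Rightarrow> 'a \<Rightarrow> bool) \<Rightarrow> nat \<Rightarrow> 'a \<Rightarrow> 'a set" where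
  "sphere V E i x = {y \<in> V. gdist V E x y = i}"

definition dist_nbhd :: "'a set \<Rightarrow> ('a \<Rightarrow> 'a \<Rightarrow> bool) \<Rightarrow> nat set \<Rightarrow> 'a \<Rightarrow> 'a set" where
  "dist_nbhd V E D x = {y \<in> V. gdist V E x y \<in> D}"

definition distance_regular :: "'a set \<Rightarrow> ('a \<Rightarrow> 'a \<Rightarrow> bool) \<Rightarrow> bool" where
  "distance_regular V E \<longleftrightarrow> connected_graph V E \<and>
     (\<exists>b c :: nat \<Rightarrow> nat. \<forall>x\<in>V. \<forall>y\<in>V.
        card {z \<in> V. E y z \<and> gdist V E x z + 1 = gdist V E x y} = c (gdist V E x y) \<and>
        card {z \<in> V. E y z \<and> gdist V E x z = gdist V E x y + 1} = b (gdist V E x y))"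

text \<open>Antipodal double cover: every vertex has exactly one vertex at maximal distance d
(the antipodal classes have size 2, so in particular d \<ge> 1).\<close>
definition antipodal_double_cover :: "'a set \<Rightarrow> ('a \<Rightarrow> 'a \<Rightarrow> bool) \<Rightarrow> bool" where
  "antipodal_double_cover V E \<longleftrightarrow> diameter V E \<ge> 1 \<and>
     (\<forall>x\<in>V. card (sphere V E (diameter V E) x) = 1)"

definition bipartite :: "'a set \<Rightarrow> ('a \<Rightarrow> 'a \<Rightarrow> bool) \<Rightarrow> bool" where
  "bipartite V E \<longleftrightarrow> (\<exists>A \<subseteq> V. \<forall>x\<in>V. \<forall>y\<in>V. E x y \<longrightarrow> (x \<in> A \<longleftrightarrow> y \<notin> A))"

definition D_magic :: "'a set \<Rightarrow> ('a \<Rightarrow> 'a \<Rightarrow> bool) \<Rightarrow> nat set \<Rightarrow> ('a \<Rightarrow> nat) \<Rightarrow> bool" where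
  "D_magic V E D f \<longleftrightarrow> bij_betw f V {1..card V} \<and>
     (\<exists>k. \<forall>x\<in>V. (\<Sum>y\<in>dist_nbhd V E D x. f y) = k)"

abbreviation distance_magic where "distance_magic V E f \<equiv> D_magic V E {1} f"
abbreviation closed_distance_magic where "closed_distance_magic V E f \<equiv> D_magic V E {0, 1} f"

end

theory Submission
  imports Defs Complex_Main
begin

text \<open>
Let \<open>w = l - \<kappa>\<close>, where \<open>\<kappa>\<close> is chosen so that \<open>w\<close> is an eigenvector of the adjacency
matrix \<open>A\<close>: eigenvalue \<open>0\<close> for a distance magic labeling, \<open>-1\<close> for a closed one.  In a
distance-regular graph the distance-\<open>i\<close> matrix is \<open>A\<^sub>i = v\<^sub>i(A)\<close> for the polynomials \<open>v\<^sub>i\<close> of the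
three-term recurrence, so \<open>A\<^sub>i w = v\<^sub>i(\<theta>) w\<close>.  In an antipodal double cover \<open>A\<^sub>d\<close> is the
permutation matrix of the antipodal involution \<open>\<sigma>\<close>, hence \<open>w \<circ> \<sigma> = v\<^sub>d(\<theta>) w\<close>, and injectivity
of \<open>l\<close> forces \<open>v\<^sub>d(\<theta>) = -1\<close>.  Since \<open>\<sigma>\<close> permutes \<open>N\<^bsub>{j,d-j}\<^esub>(x)\<close>, the sum of \<open>w\<close> over it
vanishes, so the sum of \<open>l\<close> over it is \<open>\<kappa>\<close> times its size, which does not depend on \<open>x\<close>.
In the bipartite distance magic case \<open>\<theta> = 0\<close> and all \<open>a\<^sub>i = 0\<close>, so \<open>v\<^sub>i(0)\<close> vanishes for odd
\<open>i\<close> and has sign \<open>(-1)\<^bsup>i/2\<^esup>\<close> for even \<open>i\<close>; then \<open>v\<^sub>d(0) = -1\<close> gives \<open>d \<equiv> 2 (mod 4)\<close>.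
\<close>

locale conn_graph =
  fixes V :: "'a set" and E :: "'a \<Rightarrow> 'a \<Rightarrow> bool"
  assumes connected: "connected_graph V E"
begin

abbreviation "R \<equiv> adj_rel V E"
abbreviation "gd \<equiv> gdist V E"

lemma finite_V: "finite V"
  and V_nonempty: "V \<noteq> {}"
  and E_sym: "E x y \<Longrightarrow> E y x"
  and E_irrefl: "\<not> E x x"
  using connected unfolding connected_graph_def simple_graph_def by auto

lemma adj_rel_iff: "(x, y) \<in> R \<longleftrightarrow> x \<in> V \<and> y \<in> V \<and> E x y"
  by (simp add: adj_rel_def)

lemma relpow_adj_sym: "(x, y) \<in> R ^^ n \<Longrightarrow> (y, x) \<in> R ^^ n"
proof (induction n arbitrary: y)
  case 0
  then show ?case by simp
next
  case (Suc n)
  from Suc.prems obtain z where "(x, z) \<in> R ^^ n" "(z, y) \<in> R" by (rule relpow_Suc_E)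
  then have "(y, z) \<in> R" "(z, x) \<in> R ^^ n" using Suc.IH E_sym by (auto simp: adj_rel_iff)
  then show ?case by (rule relpow_Suc_I2)
qed

lemma walk_gdist: "x \<in> V \<Longrightarrow> y \<in> V \<Longrightarrow> (x, y) \<in> R ^^ gd x y"
proof -
  assume "x \<in> V" "y \<in> V"
  then have "(x, y) \<in> R\<^sup>*" using connected unfolding connected_graph_def by auto
  then have "\<exists>n. (x, y) \<in> R ^^ n" by (simp add: rtrancl_power)
  then show ?thesis unfolding gdist_def by (rule LeastI_ex)
qed

lemma gdist_le_walk: "(x, y) \<in> R ^^ n \<Longrightarrow> gd x y \<le> n"
  unfolding gdist_def by (rule Least_le)

lemma gdist_sym: "x \<in> V \<Longrightarrow> y \<in> V \<Longrightarrow> gd x y = gd y x"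
  by (meson antisym gdist_le_walk walk_gdist relpow_adj_sym)

lemma gdist_self: "gd x x = 0"
  using gdist_le_walk[of x x 0] by simp

lemma gdist_eq_0_imp_eq: "gd x y = 0 \<Longrightarrow> x \<in> V \<Longrightarrow> y \<in> V \<Longrightarrow> x = y"
  using walk_gdist[of x y] by simp

lemma gdist_triangle: "x \<in> V \<Longrightarrow> y \<in> V \<Longrightarrow> z \<in> V \<Longrightarrow> gd x z \<le> gd x y + gd y z"
proof -
  assume "x \<in> V" "y \<in> V" "z \<in> V"
  then have "(x, z) \<in> R ^^ gd x y O R ^^ gd y z" using walk_gdist by blast
  then have "(x, z) \<in> R ^^ (gd x y + gd y z)" by (simp add: relpow_add)
  then show ?thesis by (rule gdist_le_walk)
qed

lemma gdist_eq_1_iff: "x \<in> V \<Longrightarrow> y \<in> V \<Longrightarrow> gd x y = 1 \<longleftrightarrow> E x y"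
proof
  assume xy: "x \<in> V" "y \<in> V" and "gd x y = 1"
  then show "E x y" using walk_gdist[OF xy] by (simp add: adj_rel_iff)
next
  assume xy: "x \<in> V" "y \<in> V" and e: "E x y"
  then have "gd x y \<le> 1" using gdist_le_walk[of x y 1] by (simp add: adj_rel_iff)
  moreover have "gd x y \<noteq> 0" using gdist_eq_0_imp_eq xy e E_irrefl by blast
  ultimately show "gd x y = 1" by simp
qed

lemma gdist_adj:
  assumes "x \<in> V" "y \<in> V" "z \<in> V" "E y z"
  shows "gd x z \<le> gd x y + 1" "gd x y \<le> gd x z + 1"
proof -
  have "gd y z = 1" "gd z y = 1" using assms gdist_eq_1_iff E_sym by auto
  then show "gd x z \<le> gd x y + 1" "gd x y \<le> gd x z + 1"
    using gdist_triangle[of x y z] gdist_triangle[of x z y] assms by auto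
qed

lemma gdist_Suc_imp_pred:
  assumes "x \<in> V" "y \<in> V" "gd x y = Suc n"
  shows "\<exists>z\<in>V. E z y \<and> gd x z = n"
proof -
  have "(x, y) \<in> R ^^ Suc n" using walk_gdist assms by metis
  then obtain z where z: "(x, z) \<in> R ^^ n" "(z, y) \<in> R" by (rule relpow_Suc_E)
  then have zV: "z \<in> V" and e: "E z y" by (auto simp: adj_rel_iff)
  have "gd x z \<le> n" using z(1) by (rule gdist_le_walk)
  moreover have "gd x y \<le> gd x z + 1" using gdist_adj[OF assms(1) zV assms(2) e] by simp
  ultimately show ?thesis using zV e assms by auto
qed

lemma gdist_intermediate:
  "x \<in> V \<Longrightarrow> y \<in> V \<Longrightarrow> gd x y = n \<Longrightarrow> m \<le> n \<Longrightarrow> \<exists>z\<in>V. gd x z = m"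
proof (induction n arbitrary: y)
  case 0
  then show ?case by auto
next
  case (Suc n)
  show ?case
  proof (cases "m = Suc n")
    case True
    then show ?thesis using Suc by auto
  next
    case False
    obtain z where "z \<in> V" "gd x z = n" using gdist_Suc_imp_pred Suc.prems by blast
    then show ?thesis using Suc False by auto
  qed
qed

lemma gdist_le_diameter: "x \<in> V \<Longrightarrow> y \<in> V \<Longrightarrow> gd x y \<le> diameter V E"
  and diameter_attained: "\<exists>x\<in>V. \<exists>y\<in>V. gd x y = diameter V E"
proof -
  have eq: "{gd x y | x y. x \<in> V \<and> y \<in> V} = (\<lambda>(x, y). gd x y) ` (V \<times> V)" by auto
  then have fin: "finite {gd x y | x y. x \<in> V \<and> y \<in> V}" using finite_V by simp
  show "x \<in> V \<Longrightarrow> y \<in> V \<Longrightarrow> gd x y \<le> diameter V E"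
    unfolding diameter_def using fin by (intro Max_ge) auto
  have "diameter V E \<in> {gd x y | x y. x \<in> V \<and> y \<in> V}"
    unfolding diameter_def using fin V_nonempty by (intro Max_in) auto
  then show "\<exists>x\<in>V. \<exists>y\<in>V. gd x y = diameter V E" by force
qed

lemma exists_gdist_eq: "m \<le> diameter V E \<Longrightarrow> \<exists>x\<in>V. \<exists>y\<in>V. gd x y = m"
  using diameter_attained gdist_intermediate by metis

lemma sphere_subset: "sphere V E i x \<subseteq> V"
  unfolding sphere_def by auto

lemma sphere_0: "x \<in> V \<Longrightarrow> sphere V E 0 x = {x}"
  unfolding sphere_def using gdist_eq_0_imp_eq gdist_self by auto

lemma sphere_1: "x \<in> V \<Longrightarrow> sphere V E 1 x = {z \<in> V. E x z}"
  unfolding sphere_def using gdist_eq_1_iff by auto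

lemma bipartite_walk_parity:
  assumes "\<forall>x\<in>V. \<forall>y\<in>V. E x y \<longrightarrow> (x \<in> A \<longleftrightarrow> y \<notin> A)"
  shows "(u, v) \<in> R ^^ n \<Longrightarrow> v \<in> A \<longleftrightarrow> (u \<in> A \<longleftrightarrow> even n)"
proof (induction n arbitrary: v)
  case 0
  then show ?case by simp
next
  case (Suc n)
  from Suc.prems obtain m where "(u, m) \<in> R ^^ n" "(m, v) \<in> R" by (rule relpow_Suc_E)
  then show ?case using Suc.IH assms by (auto simp: adj_rel_iff)
qed

lemma bipartite_adj_gdist_neq:
  assumes "bipartite V E" "x \<in> V" "y \<in> V" "z \<in> V" "E y z"
  shows "gd x y \<noteq> gd x z"
proof
  assume eq: "gd x y = gd x z"
  obtain A where A: "\<forall>x\<in>V. \<forall>y\<in>V. E x y \<longrightarrow> (x \<in> A \<longleftrightarrow> y \<notin> A)"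
    using assms(1) unfolding bipartite_def by auto
  have "y \<in> A \<longleftrightarrow> (x \<in> A \<longleftrightarrow> even (gd x y))" "z \<in> A \<longleftrightarrow> (x \<in> A \<longleftrightarrow> even (gd x z))"
    using bipartite_walk_parity[OF A walk_gdist] assms by blast+
  then show False using eq A assms by auto
qed

definition dist_eigen :: "nat \<Rightarrow> ('a \<Rightarrow> real) \<Rightarrow> real \<Rightarrow> bool" where
  "dist_eigen i w p \<longleftrightarrow> (\<forall>x\<in>V. (\<Sum>y\<in>sphere V E i x. w y) = p * w x)"

lemma sum_sphere_eq_sum_if: "(\<Sum>y\<in>sphere V E i x. w y) = (\<Sum>y\<in>V. if gd x y = i then w y else 0)"
  unfolding sphere_def using finite_V by (simp add: sum.inter_filter)

lemma sum_neighbours_sum_sphere: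
  assumes x: "x \<in> V"
  shows "(\<Sum>z\<in>sphere V E 1 x. \<Sum>y\<in>sphere V E k z. w y)
       = (\<Sum>y\<in>V. real (card {z \<in> V. E x z \<and> gd z y = k}) * w y)"
proof -
  let ?N = "{z \<in> V. E x z}"
  have "(\<Sum>z\<in>sphere V E 1 x. \<Sum>y\<in>sphere V E k z. w y)
      = (\<Sum>z\<in>?N. \<Sum>y\<in>V. if gd z y = k then w y else 0)"
    unfolding sphere_1[OF x] sum_sphere_eq_sum_if ..
  also have "\<dots> = (\<Sum>y\<in>V. \<Sum>z\<in>?N. if gd z y = k then w y else 0)"
    by (rule sum.swap)
  also have "\<dots> = (\<Sum>y\<in>V. real (card {z \<in> V. E x z \<and> gd z y = k}) * w y)"
  proof (rule sum.cong[OF refl])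
    fix y
    have "{z \<in> ?N. gd z y = k} = {z \<in> V. E x z \<and> gd z y = k}" by auto
    then show "(\<Sum>z\<in>?N. if gd z y = k then w y else 0)
             = real (card {z \<in> V. E x z \<and> gd z y = k}) * w y"
      using finite_V by (simp add: sum.inter_filter[symmetric])
  qed
  finally show ?thesis .
qed

end

locale drg = conn_graph +
  fixes b c :: "nat \<Rightarrow> nat"
  assumes intersection_numbers: "\<forall>x\<in>V. \<forall>y\<in>V.
        card {z \<in> V. E y z \<and> gdist V E x z + 1 = gdist V E x y} = c (gdist V E x y) \<and>
        card {z \<in> V. E y z \<and> gdist V E x z = gdist V E x y + 1} = b (gdist V E x y)"
begin

definition a :: "nat \<Rightarrow> real" where
  "a h = real (b 0) - real (b h) - real (c h)"

lemma card_c: "x \<in> V \<Longrightarrow> y \<in> V \<Longrightarrow> card {z \<in> V. E y z \<and> gd x z + 1 = gd x y} = c (gd x y)"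
  and card_b: "x \<in> V \<Longrightarrow> y \<in> V \<Longrightarrow> card {z \<in> V. E y z \<and> gd x z = gd x y + 1} = b (gd x y)"
  using intersection_numbers by auto

lemma card_neighbours:
  assumes y: "y \<in> V"
  shows "card {z \<in> V. E y z} = b 0"
proof -
  have "{z \<in> V. E y z} = {z \<in> V. E y z \<and> gd y z = gd y y + 1}"
    using gdist_eq_1_iff[OF y] by (auto simp: gdist_self)
  then show ?thesis using card_b[OF y y] by (simp add: gdist_self)
qed

lemma card_sphere_1: "x \<in> V \<Longrightarrow> card (sphere V E 1 x) = b 0"
  using sphere_1 card_neighbours by simp

lemma card_a:
  assumes x: "x \<in> V" and y: "y \<in> V"
  shows "real (card {z \<in> V. E y z \<and> gd x z = gd x y}) = a (gd x y)"
proof -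
  let ?A = "{z \<in> V. E y z \<and> gd x z + 1 = gd x y}"
  let ?B = "{z \<in> V. E y z \<and> gd x z = gd x y}"
  let ?C = "{z \<in> V. E y z \<and> gd x z = gd x y + 1}"
  have "{z \<in> V. E y z} = ?A \<union> ?B \<union> ?C"
  proof safe
    fix z assume "z \<in> V" "E y z" "gd x z \<noteq> gd x y" "gd x z \<noteq> gd x y + 1"
    then show "gd x z + 1 = gd x y" using gdist_adj[OF x y \<open>z \<in> V\<close> \<open>E y z\<close>] by simp
  qed
  moreover have "card (?A \<union> ?B \<union> ?C) = card ?A + card ?B + card ?C"
    using finite_V by (subst card_Un_disjoint, auto)+
  ultimately show ?thesis
    using card_neighbours[OF y] card_b[OF x y] card_c[OF x y] by (simp add: a_def)
qed

lemma card_neighbours_gdist: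
  assumes x: "x \<in> V" and y: "y \<in> V"
  shows "real (card {z \<in> V. E x z \<and> gd z y = i}) =
      (if i + 1 = gd x y then real (c (gd x y)) else 0)
    + (if i = gd x y then a (gd x y) else 0)
    + (if i = gd x y + 1 then real (b (gd x y)) else 0)"
proof -
  let ?h = "gd x y"
  have h: "gd y x = ?h" using gdist_sym x y by simp
  have "{z \<in> V. E x z \<and> gd z y = i} = {z \<in> V. E x z \<and> gd y z = i}"
    using gdist_sym y by auto
  moreover consider "i + 1 = ?h" | "i = ?h" | "i = ?h + 1" | "i + 1 \<noteq> ?h" "i \<noteq> ?h" "i \<noteq> ?h + 1"
    by blast
  then have "real (card {z \<in> V. E x z \<and> gd y z = i}) =
      (if i + 1 = ?h then real (c ?h) else 0) + (if i = ?h then a ?h else 0)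
    + (if i = ?h + 1 then real (b ?h) else 0)"
  proof cases
    case 1
    then have "{z \<in> V. E x z \<and> gd y z = i} = {z \<in> V. E x z \<and> gd y z + 1 = gd y x}"
      using h by auto
    then show ?thesis using card_c[OF y x] h 1 by simp
  next
    case 2
    then show ?thesis using card_a[OF y x] h by simp
  next
    case 3
    then show ?thesis using card_b[OF y x] h by simp
  next
    case 4
    have "gd y z \<noteq> i" if "z \<in> V" "E x z" for z
      using gdist_adj[OF y x that] h 4 by auto
    then have "{z \<in> V. E x z \<and> gd y z = i} = {}" by blast
    then show ?thesis using 4 by (simp only: card.empty of_nat_0 if_False add_0)
  qed
  ultimately show ?thesis by simp
qed

lemma sum_sphere_three_term:
  assumes x: "x \<in> V"
  shows "(\<Sum>z\<in>sphere V E 1 x. \<Sum>y\<in>sphere V E (Suc i) z. w y) =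
      real (c (Suc (Suc i))) * (\<Sum>y\<in>sphere V E (Suc (Suc i)) x. w y)
    + a (Suc i) * (\<Sum>y\<in>sphere V E (Suc i) x. w y)
    + real (b i) * (\<Sum>y\<in>sphere V E i x. w y)"
proof -
  have "(\<Sum>z\<in>sphere V E 1 x. \<Sum>y\<in>sphere V E (Suc i) z. w y)
      = (\<Sum>y\<in>V. (if gd x y = Suc (Suc i) then real (c (Suc (Suc i))) * w y else 0)
          + (if gd x y = Suc i then a (Suc i) * w y else 0)
          + (if gd x y = i then real (b i) * w y else 0))"
    unfolding sum_neighbours_sum_sphere[OF x]
  proof (rule sum.cong[OF refl])
    fix y assume "y \<in> V"
    show "real (card {z \<in> V. E x z \<and> gd z y = Suc i}) * w y =
        (if gd x y = Suc (Suc i) then real (c (Suc (Suc i))) * w y else 0)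
      + (if gd x y = Suc i then a (Suc i) * w y else 0)
      + (if gd x y = i then real (b i) * w y else 0)"
      unfolding card_neighbours_gdist[OF x \<open>y \<in> V\<close>] by (auto simp: algebra_simps)
  qed
  then show ?thesis
    by (simp only: sum_sphere_eq_sum_if sum.distrib sum_distrib_left
        if_distrib[of "(*) _"] mult_zero_right)
qed

lemma c_pos:
  assumes "1 \<le> h" "h \<le> diameter V E"
  shows "0 < c h"
proof -
  obtain x y where xy: "x \<in> V" "y \<in> V" "gd x y = h" using exists_gdist_eq assms by blast
  obtain n where h: "h = Suc n" using assms by (cases h) auto
  obtain z where "z \<in> V" "E z y" "gd x z = n" using gdist_Suc_imp_pred xy h by blast
  then have "z \<in> {z \<in> V. E y z \<and> gd x z + 1 = gd x y}" using xy h E_sym by auto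
  then have "0 < card {z \<in> V. E y z \<and> gd x z + 1 = gd x y}"
    using finite_V by (subst card_gt_0_iff) auto
  then show ?thesis using card_c[OF xy(1,2)] xy(3) by simp
qed

lemma b_pos:
  assumes "h < diameter V E"
  shows "0 < b h"
proof -
  obtain x y where xy: "x \<in> V" "y \<in> V" "gd x y = Suc h"
    using exists_gdist_eq assms by (metis Suc_leI)
  obtain z where z: "z \<in> V" "E z y" "gd x z = h" using gdist_Suc_imp_pred xy by blast
  then have "y \<in> {u \<in> V. E z u \<and> gd x u = gd x z + 1}" using xy by auto
  then have "0 < card {u \<in> V. E z u \<and> gd x u = gd x z + 1}"
    using finite_V by (subst card_gt_0_iff) auto
  then show ?thesis using card_b[OF xy(1) z(1)] z(3) by simp
qed

text \<open>\<open>dist_poly \<theta> i = v\<^sub>i(\<theta>)\<close> for the polynomials \<open>v\<^sub>i\<close> with \<open>A\<^sub>i = v\<^sub>i(A)\<close>.\<close>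

fun dist_poly :: "real \<Rightarrow> nat \<Rightarrow> real" where
  "dist_poly \<theta> 0 = 1"
| "dist_poly \<theta> (Suc 0) = \<theta>"
| "dist_poly \<theta> (Suc (Suc i)) =
     ((\<theta> - a (Suc i)) * dist_poly \<theta> (Suc i) - real (b i) * dist_poly \<theta> i) / real (c (Suc (Suc i)))"

lemma dist_eigen_dist_poly:
  assumes eig: "dist_eigen 1 w \<theta>"
  shows "i \<le> diameter V E \<Longrightarrow> dist_eigen i w (dist_poly \<theta> i)"
proof (induction i rule: induct_nat_012)
  case 0
  then show ?case by (simp add: dist_eigen_def sphere_0)
next
  case 1
  then show ?case using eig by simp
next
  case (ge2 i)
  let ?p = "dist_poly \<theta> i" and ?q = "dist_poly \<theta> (Suc i)"
  have p: "dist_eigen i w ?p" and q: "dist_eigen (Suc i) w ?q" using ge2 by simp_all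
  have "(\<Sum>y\<in>sphere V E (Suc (Suc i)) x. w y) = dist_poly \<theta> (Suc (Suc i)) * w x"
    if x: "x \<in> V" for x
  proof -
    have "(\<Sum>z\<in>sphere V E 1 x. \<Sum>y\<in>sphere V E (Suc i) z. w y) = (\<Sum>z\<in>sphere V E 1 x. ?q * w z)"
      using q sphere_subset by (intro sum.cong) (auto simp: dist_eigen_def)
    also have "\<dots> = ?q * (\<theta> * w x)"
      using eig x by (simp add: dist_eigen_def flip: sum_distrib_left)
    finally have "real (c (Suc (Suc i))) * (\<Sum>y\<in>sphere V E (Suc (Suc i)) x. w y)
        = ((\<theta> - a (Suc i)) * ?q - real (b i) * ?p) * w x"
      using sum_sphere_three_term[OF x, of w i] p q x by (simp add: dist_eigen_def algebra_simps)
    moreover have "0 < c (Suc (Suc i))" using c_pos ge2.prems by simp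
    ultimately show ?thesis by (simp add: field_simps)
  qed
  then show ?case by (simp add: dist_eigen_def)
qed

lemma card_sphere_eq:
  assumes "i \<le> diameter V E" "x \<in> V" "y \<in> V"
  shows "card (sphere V E i x) = card (sphere V E i y)"
proof -
  have "dist_eigen 1 (\<lambda>_. 1) (real (b 0))" using card_sphere_1 by (simp add: dist_eigen_def)
  then have "dist_eigen i (\<lambda>_. 1) (dist_poly (b 0) i)" using assms(1) by (rule dist_eigen_dist_poly)
  then have "real (card (sphere V E i x)) = real (card (sphere V E i y))"
    using assms(2,3) by (simp add: dist_eigen_def)
  then show ?thesis by simp
qed

lemma card_dist_nbhd_eq:
  assumes "Ds \<subseteq> {..diameter V E}" "x \<in> V" "y \<in> V"
  shows "card (dist_nbhd V E Ds x) = card (dist_nbhd V E Ds y)"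
proof -
  have "card (dist_nbhd V E Ds u) = (\<Sum>i\<in>Ds. card (sphere V E i u))" for u
  proof -
    have "dist_nbhd V E Ds u = (\<Union>i\<in>Ds. sphere V E i u)"
      unfolding dist_nbhd_def sphere_def by auto
    then show ?thesis
      by (simp only:) (intro card_UN_disjoint finite_subset[OF assms(1) finite_atMost];
          auto simp: finite_V sphere_def)
  qed
  moreover have "card (sphere V E i x) = card (sphere V E i y)" if "i \<in> Ds" for i
    using assms that card_sphere_eq by auto
  ultimately show ?thesis by (simp cong: sum.cong)
qed

lemma bipartite_a_eq_0:
  assumes "bipartite V E" "h \<le> diameter V E"
  shows "a h = 0"
proof -
  obtain x y where xy: "x \<in> V" "y \<in> V" "gd x y = h" using exists_gdist_eq assms(2) by blast
  have "{z \<in> V. E y z \<and> gd x z = gd x y} = {}"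
    using bipartite_adj_gdist_neq[OF assms(1) xy(1,2)] by force
  then show ?thesis using card_a[OF xy(1,2)] xy(3) by (metis card.empty of_nat_0)
qed

lemma dist_poly_0_bipartite:
  assumes "bipartite V E"
  shows "i \<le> diameter V E \<Longrightarrow>
    (odd i \<longrightarrow> dist_poly 0 i = 0) \<and> (even i \<longrightarrow> 0 < (-1) ^ (i div 2) * dist_poly 0 i)"
proof (induction i rule: induct_nat_012)
  case 0
  then show ?case by simp
next
  case 1
  then show ?case by simp
next
  case (ge2 i)
  have "a (Suc i) = 0" using bipartite_a_eq_0[OF assms] ge2.prems by simp
  then have rec: "(-1) ^ (Suc (Suc i) div 2) * dist_poly 0 (Suc (Suc i))
      = real (b i) / real (c (Suc (Suc i))) * ((-1) ^ (i div 2) * dist_poly 0 i)"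
    by simp
  have pos: "0 < real (b i) / real (c (Suc (Suc i)))" using b_pos c_pos ge2.prems by simp
  show ?case
  proof (cases "even i")
    case True
    then have "0 < (-1) ^ (i div 2) * dist_poly 0 i" using ge2 by simp
    then show ?thesis using True rec mult_pos_pos[OF pos] by simp
  next
    case False
    then have "dist_poly 0 i = 0" using ge2 by simp
    then show ?thesis using False rec by simp
  qed
qed

lemma closed_distance_magic_eigen:
  assumes "closed_distance_magic V E l"
  shows "\<exists>\<kappa>. dist_eigen 1 (\<lambda>y. real (l y) - \<kappa>) (-1)"
proof -
  obtain k where k: "\<forall>x\<in>V. (\<Sum>y\<in>dist_nbhd V E {0, 1} x. l y) = k"
    using assms unfolding D_magic_def by blast
  let ?\<kappa> = "real k / (real (b 0) + 1)"
  have "(\<Sum>y\<in>sphere V E 1 x. real (l y) - ?\<kappa>) = -1 * (real (l x) - ?\<kappa>)" if x: "x \<in> V" for x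
  proof -
    have nbhd: "dist_nbhd V E {0, 1} x = insert x (sphere V E 1 x)" and "x \<notin> sphere V E 1 x"
      unfolding dist_nbhd_def sphere_def using x gdist_self gdist_eq_0_imp_eq by auto
    have "k = (\<Sum>y\<in>dist_nbhd V E {0, 1} x. l y)" using k x by simp
    also have "\<dots> = l x + (\<Sum>y\<in>sphere V E 1 x. l y)"
      unfolding nbhd using \<open>x \<notin> sphere V E 1 x\<close> finite_subset[OF sphere_subset finite_V] by simp
    finally have "l x + (\<Sum>y\<in>sphere V E 1 x. l y) = k" ..
    then have "real (l x) + (\<Sum>y\<in>sphere V E 1 x. real (l y)) = real k"
      by (metis of_nat_add of_nat_sum)
    have "(\<Sum>y\<in>sphere V E 1 x. real (l y) - ?\<kappa>) = (\<Sum>y\<in>sphere V E 1 x. real (l y)) - real (b 0) * ?\<kappa>"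
      using card_sphere_1[OF x] by (simp add: sum_subtractf)
    also have "\<dots> = real k - real (l x) - real (b 0) * ?\<kappa>"
      using \<open>real (l x) + _ = _\<close> by simp
    also have "\<dots> = -1 * (real (l x) - ?\<kappa>)"
    proof -
      have "real (b 0) + 1 \<noteq> 0" by simp
      then show ?thesis by (simp add: field_simps)
    qed
    finally show ?thesis .
  qed
  then show ?thesis unfolding dist_eigen_def by blast
qed

end

locale antipodal_drg = drg +
  assumes antipodal: "antipodal_double_cover V E"
begin

abbreviation "D \<equiv> diameter V E"

lemma diameter_pos: "0 < D"
  using antipodal unfolding antipodal_double_cover_def by auto

definition antipode :: "'a \<Rightarrow> 'a" where
  "antipode x = the_elem (sphere V E D x)"

lemma sphere_diameter: "x \<in> V \<Longrightarrow> sphere V E D x = {antipode x}"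
  using antipodal unfolding antipodal_double_cover_def antipode_def
  by (metis One_nat_def card_1_singleton_iff the_elem_eq)

lemma antipode_in_V: "x \<in> V \<Longrightarrow> antipode x \<in> V"
  and gdist_antipode: "x \<in> V \<Longrightarrow> gd x (antipode x) = D"
  and antipode_unique: "x \<in> V \<Longrightarrow> y \<in> V \<Longrightarrow> gd x y = D \<Longrightarrow> y = antipode x"
  using sphere_diameter[of x] unfolding sphere_def by auto

text \<open>Every vertex lies on a geodesic between \<open>x\<close> and its antipode: walk away from \<open>x\<close>,
  which is possible since \<open>b\<^sub>h > 0\<close> for \<open>h < d\<close>, until distance \<open>d\<close> is reached.\<close>

lemma gdist_add_gdist_antipode:
  assumes x: "x \<in> V" and y: "y \<in> V"
  shows "gd x y + gd y (antipode x) = D"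
proof -
  have walk: "m \<le> D \<Longrightarrow> y \<in> V \<Longrightarrow> gd x y = D - m \<Longrightarrow> gd y (antipode x) \<le> m" for m y
  proof (induction m arbitrary: y)
    case 0
    then show ?case using antipode_unique x gdist_self by auto
  next
    case (Suc m)
    have "0 < card {z \<in> V. E y z \<and> gd x z = gd x y + 1}"
      using b_pos card_b[OF x Suc.prems(2)] Suc.prems by simp
    then have "{z \<in> V. E y z \<and> gd x z = gd x y + 1} \<noteq> {}" using card_gt_0_iff by blast
    then obtain z where z: "z \<in> V" "E y z" "gd x z = gd x y + 1" by blast
    have "gd z (antipode x) \<le> m" using Suc z by simp
    moreover have "gd y z = 1" using gdist_eq_1_iff Suc.prems(2) z by auto
    ultimately show ?case
      using gdist_triangle[OF Suc.prems(2) z(1) antipode_in_V[OF x]] by simp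
  qed
  have "gd x y \<le> D" using gdist_le_diameter x y by simp
  then have "gd y (antipode x) \<le> D - gd x y" using walk[of "D - gd x y"] y by simp
  moreover have "D \<le> gd x y + gd y (antipode x)"
    using gdist_triangle[OF x y antipode_in_V[OF x]] gdist_antipode[OF x] by simp
  ultimately show ?thesis using \<open>gd x y \<le> D\<close> by linarith
qed

lemma antipode_antipode: "x \<in> V \<Longrightarrow> antipode (antipode x) = x"
  using antipode_unique[OF antipode_in_V] gdist_sym[OF antipode_in_V] gdist_antipode by metis

lemma gdist_antipode_right: "x \<in> V \<Longrightarrow> y \<in> V \<Longrightarrow> gd x (antipode y) = D - gd x y"
  using gdist_add_gdist_antipode[of y x] gdist_sym[of x y] by simp

lemma antipode_neq: "x \<in> V \<Longrightarrow> antipode x \<noteq> x"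
  using gdist_antipode[of x] gdist_self[of x] diameter_pos by auto

lemma dist_eigen_diameter_iff: "dist_eigen D w p \<longleftrightarrow> (\<forall>x\<in>V. w (antipode x) = p * w x)"
  unfolding dist_eigen_def using sphere_diameter by simp

lemma dist_poly_diameter:
  assumes eig: "dist_eigen 1 w \<theta>" and inj: "inj_on w V"
  shows "dist_poly \<theta> D = -1"
proof -
  let ?p = "dist_poly \<theta> D"
  have p: "w (antipode x) = ?p * w x" if "x \<in> V" for x
    using dist_eigen_dist_poly[OF eig order_refl] that unfolding dist_eigen_diameter_iff by blast
  obtain x where x: "x \<in> V" using V_nonempty by auto
  have ne: "w (antipode x) \<noteq> w x"
    using inj antipode_in_V[OF x] antipode_neq[OF x] x by (auto simp: inj_on_def)
  then have "?p \<noteq> 1" and "w x \<noteq> 0" using p[OF x] by auto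
  have "w x = ?p * (?p * w x)"
    using p[OF antipode_in_V[OF x]] p[OF x] antipode_antipode[OF x] by simp
  then have "?p\<^sup>2 = 1" using \<open>w x \<noteq> 0\<close> by (simp add: power2_eq_square)
  then show ?thesis using \<open>?p \<noteq> 1\<close> by (simp add: power2_eq_1_iff)
qed

lemma antipode_negates:
  assumes "dist_eigen 1 w \<theta>" "inj_on w V" "x \<in> V"
  shows "w (antipode x) = - w x"
  using dist_eigen_dist_poly[OF assms(1) order_refl] dist_poly_diameter[OF assms(1,2)] assms(3)
  unfolding dist_eigen_diameter_iff by simp

lemma sum_dist_nbhd_eq_0:
  assumes anti: "\<And>x. x \<in> V \<Longrightarrow> w (antipode x) = - w x"
    and sym: "\<forall>i\<in>Ds. D - i \<in> Ds" and x: "x \<in> V"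
  shows "(\<Sum>y\<in>dist_nbhd V E Ds x. w y) = (0::real)"
proof -
  let ?N = "dist_nbhd V E Ds x"
  have "antipode y \<in> ?N" if "y \<in> ?N" for y
    using that sym gdist_antipode_right[OF x] antipode_in_V unfolding dist_nbhd_def by auto
  moreover have "antipode (antipode y) = y" if "y \<in> ?N" for y
    using that antipode_antipode unfolding dist_nbhd_def by auto
  ultimately have "bij_betw antipode ?N ?N"
    by (intro bij_betw_byWitness[where f' = antipode]) auto
  then have "(\<Sum>y\<in>?N. w y) = (\<Sum>y\<in>?N. w (antipode y))"
    by (simp add: sum.reindex_bij_betw)
  also have "\<dots> = - (\<Sum>y\<in>?N. w y)"
    using anti by (simp add: dist_nbhd_def sum_negf)
  finally show ?thesis by simp
qed

lemma D_magic_if_symmetric: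
  assumes bij: "bij_betw l V {1..card V}" and eig: "dist_eigen 1 (\<lambda>y. real (l y) - \<kappa>) \<theta>"
    and Ds: "Ds \<subseteq> {..D}" "\<forall>i\<in>Ds. D - i \<in> Ds"
  shows "D_magic V E Ds l"
proof -
  let ?w = "\<lambda>y. real (l y) - \<kappa>"
  have "inj_on ?w V" using bij_betw_imp_inj_on[OF bij] by (simp add: inj_on_def)
  then have anti: "?w (antipode x) = - ?w x" if "x \<in> V" for x
    using antipode_negates[OF eig _ that] by blast
  have sum: "real (\<Sum>y\<in>dist_nbhd V E Ds x. l y) = \<kappa> * real (card (dist_nbhd V E Ds x))"
    if "x \<in> V" for x
    using sum_dist_nbhd_eq_0[where w = ?w, OF anti Ds(2) that] by (simp add: sum_subtractf)
  obtain x0 where x0: "x0 \<in> V" using V_nonempty by auto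
  have "(\<Sum>y\<in>dist_nbhd V E Ds x. l y) = (\<Sum>y\<in>dist_nbhd V E Ds x0. l y)" if "x \<in> V" for x
    using sum[OF that] sum[OF x0] card_dist_nbhd_eq[OF Ds(1) that x0] by (metis of_nat_eq_iff)
  then show ?thesis unfolding D_magic_def using bij by blast
qed

lemma distance_magic_eigen:
  assumes "distance_magic V E l"
  shows "\<exists>\<kappa>. dist_eigen 1 (\<lambda>y. real (l y) - \<kappa>) 0"
proof -
  obtain k where k: "\<forall>x\<in>V. (\<Sum>y\<in>dist_nbhd V E {1} x. l y) = k"
    using assms unfolding D_magic_def by blast
  have "0 < b 0" using b_pos diameter_pos by simp
  have "dist_nbhd V E {1} x = sphere V E 1 x" for x
    unfolding dist_nbhd_def sphere_def by auto
  then have "(\<Sum>y\<in>sphere V E 1 x. real (l y)) = real k" if "x \<in> V" for x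
    using k that by (metis of_nat_sum)
  then have "(\<Sum>y\<in>sphere V E 1 x. real (l y) - real k / real (b 0)) = 0 * (real (l x) - real k / real (b 0))"
    if "x \<in> V" for x
    using that card_sphere_1[OF that] \<open>0 < b 0\<close> by (simp add: sum_subtractf)
  then show ?thesis unfolding dist_eigen_def by blast
qed

lemma bipartite_diameter_mod_4:
  assumes "bipartite V E" "inj_on l V" "dist_eigen 1 (\<lambda>y. real (l y) - \<kappa>) 0"
  shows "D mod 4 = 2"
proof -
  have "inj_on (\<lambda>y. real (l y) - \<kappa>) V" using assms(2) by (simp add: inj_on_def)
  then have "dist_poly 0 D = -1" using dist_poly_diameter[OF assms(3)] by blast
  then have "even D" and "(-1::real) ^ (D div 2) < 0"
    using dist_poly_0_bipartite[OF assms(1) order_refl] by auto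
  then have "odd (D div 2)" by auto
  moreover have "n mod 4 = 2" if "even n" "odd (n div 2)" for n :: nat
    using that unfolding even_iff_mod_2_eq_zero by presburger
  ultimately show ?thesis using \<open>even D\<close> by blast
qed

end

theorem theorem2p7:
  fixes V :: "'a set" and E :: "'a \<Rightarrow> 'a \<Rightarrow> bool" and l :: "'a \<Rightarrow> nat" and d :: nat
  assumes "distance_regular V E"
    and "d = diameter V E"
    and "antipodal_double_cover V E"
  shows "((distance_magic V E l \<or> closed_distance_magic V E l) \<longrightarrow>
           (\<forall>j\<in>{0..d}. D_magic V E {j, d - j} l))
         \<and> (bipartite V E \<and> distance_magic V E l \<longrightarrow> d mod 4 = 2)"
proof -
  obtain b c where "antipodal_drg V E b c"
    using assms(1,3) unfolding distance_regular_def antipodal_drg_def antipodal_drg_axioms_def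
      drg_def drg_axioms_def conn_graph_def by blast
  then interpret antipodal_drg V E b c .
  show ?thesis
  proof (intro conjI impI)
    assume "distance_magic V E l \<or> closed_distance_magic V E l"
    then obtain \<kappa> \<theta> where bij: "bij_betw l V {1..card V}"
      and eig: "dist_eigen 1 (\<lambda>y. real (l y) - \<kappa>) \<theta>"
      using distance_magic_eigen closed_distance_magic_eigen unfolding D_magic_def by blast
    show "\<forall>j\<in>{0..d}. D_magic V E {j, d - j} l"
      using D_magic_if_symmetric[OF bij eig] assms(2) by auto
  next
    assume "bipartite V E \<and> distance_magic V E l"
    moreover from this obtain \<kappa> where "dist_eigen 1 (\<lambda>y. real (l y) - \<kappa>) 0"
      using distance_magic_eigen by blast
    ultimately show "d mod 4 = 2"
      using bipartite_diameter_mod_4 assms(2) unfolding D_magic_def by (blast dest: bij_betw_imp_inj_on)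
  qed
qed

end
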